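(* Let $\{(\mathcal{X}_i,\mathring{\mathcal{X}}_i,p_i)\}_{i\in\mathcal{I}}$ be $B$-$B$-bimodules with specified projections with reduced free product $(\mathcal{X},\mathring{\mathcal{X}},p)$, and set $\mathcal{A}=\mathcal{L}(\mathcal{X})$, $\mathbb{E}=\mathbb{E}_{\mathcal{L}(\mathcal{X})}$, $\mathcal{A}_{i,\mathcal{F}}=\lambda_i(\mathcal{L}(\mathcal{X}_i))$, $\mathcal{A}_{i,\mathcal{B}}=P_i\lambda_i(\mathcal{L}(\mathcal{X}_i))P_i$. Let $\omega:[n]\to\mathcal{I}$, $\chi:[n]\to\{\mathcal{F},\mathcal{B}\}$ and $a_k\in\mathcal{A}_{\omega(k),\chi(k)}$. If $\chi(1)=\mathcal{B}$, then there exists $T\in\mathcal{A}_{\omega(1),\mathcal{F}}$ such that $\mathbb{E}(a_1\cdots a_n)=\mathbb{E}(Ta_2\cdots a_n)$.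
   Context: $B$ is a unital complex algebra. A $B$-$B$-bimodule with specified projection is a triple $(\mathcal{X},\mathring{\mathcal{X}},p)$ with $\mathcal{X}=B\oplus\mathring{\mathcal{X}}$ a direct sum of $B$-$B$-bimodules and $p(b\oplus\eta)=b$; $\mathcal{L}(\mathcal{X})$ is the algebra of linear operators on $\mathcal{X}$ respecting the bimodule structure and $\mathbb{E}_{\mathcal{L}(\mathcal{X})}(T)=p(T(1_B\oplus0))$. The reduced free product of $\{(\mathcal{X}_i,\mathring{\mathcal{X}}_i,p_i)\}$ is $\mathcal{X}=B\oplus\mathring{\mathcal{X}}$ with $\mathring{\mathcal{X}}=\bigoplus_{n\ge1}\bigoplus_{i_1\ne\cdots\ne i_n}\mathring{\mathcal{X}}_{i_1}\otimes_B\cdots\otimes_B\mathring{\mathcal{X}}_{i_n}$ (consecutive indices distinct) and $p$ the projection onto $B$. For $i\in\mathcal{I}$, $\mathcal{X}(i)=B\oplus\bigoplus_{n\ge1}\bigoplus_{i_1\ne\cdots\ne i_n,\ i_1\ne i}\mathring{\mathcal{X}}_{i_1}\otimes_B\cdots\otimes_B\mathring{\mathcal{X}}_{i_n}$, $V_i:\mathcal{X}\to\mathcal{X}_i\otimes_B\mathcal{X}(i)$ is the natural isomorphism, $\lambda_i(T)=V_i^{-1}(T\otimes I)V_i$ for $T\in\mathcal{L}(\mathcal{X}_i)$, and $P_i$ is the projection of $\mathcal{X}$ onto the summand $B\oplus\mathring{\mathcal{X}}_i$ (zero on all other summands). *)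

theory Defs
  imports Complex_Main "HOL-Library.Poly_Mapping"
begin

text \<open>A unital complex algebra B is a unital ring (the type 'b) together with a unital
  ring homomorphism emb from the complex numbers into the centre of B; the complex
  scalar multiplication is z.b = emb z * b.\<close>

definition unital_calg :: "(complex \<Rightarrow> 'b::ring_1) \<Rightarrow> bool" where
  "unital_calg emb \<longleftrightarrow> emb 1 = 1 \<and> (\<forall>z w. emb (z + w) = emb z + emb w)
     \<and> (\<forall>z w. emb (z * w) = emb z * emb w) \<and> (\<forall>z b. emb z * b = b * emb z)"

text \<open>For i in the index type 'i, the bimodule X_i is B (+) Xo_i, where Xo_i is the
  carrier Xo D i (a subset of the common type 'x) with left action lm D i and right
  action rm D i.  The element b (+) xi of X_i is the pair (b, xi).\<close>

record ('b, 'i, 'x) fpdata =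
  Xo :: "'i \<Rightarrow> 'x set"
  lm :: "'i \<Rightarrow> 'b \<Rightarrow> 'x \<Rightarrow> 'x"
  rm :: "'i \<Rightarrow> 'x \<Rightarrow> 'b \<Rightarrow> 'x"

definition bimod :: "(complex \<Rightarrow> 'b::ring_1) \<Rightarrow> ('b, 'i, 'x::ab_group_add) fpdata \<Rightarrow> 'i \<Rightarrow> bool" where
  "bimod emb D i \<longleftrightarrow>
     0 \<in> Xo D i \<and>
     (\<forall>x\<in>Xo D i. \<forall>y\<in>Xo D i. x + y \<in> Xo D i) \<and>
     (\<forall>x\<in>Xo D i. - x \<in> Xo D i) \<and>
     (\<forall>b. \<forall>x\<in>Xo D i. lm D i b x \<in> Xo D i \<and> rm D i x b \<in> Xo D i) \<and>
     (\<forall>a b. \<forall>x\<in>Xo D i. lm D i (a * b) x = lm D i a (lm D i b x)) \<and>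
     (\<forall>a b. \<forall>x\<in>Xo D i. rm D i x (a * b) = rm D i (rm D i x a) b) \<and>
     (\<forall>x\<in>Xo D i. lm D i 1 x = x \<and> rm D i x 1 = x) \<and>
     (\<forall>a b. \<forall>x\<in>Xo D i. lm D i (a + b) x = lm D i a x + lm D i b x) \<and>
     (\<forall>a b. \<forall>x\<in>Xo D i. rm D i x (a + b) = rm D i x a + rm D i x b) \<and>
     (\<forall>a. \<forall>x\<in>Xo D i. \<forall>y\<in>Xo D i. lm D i a (x + y) = lm D i a x + lm D i a y) \<and>
     (\<forall>a. \<forall>x\<in>Xo D i. \<forall>y\<in>Xo D i. rm D i (x + y) a = rm D i x a + rm D i y a) \<and>
     (\<forall>a b. \<forall>x\<in>Xo D i. lm D i a (rm D i x b) = rm D i (lm D i a x) b) \<and>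
     (\<forall>z. \<forall>x\<in>Xo D i. lm D i (emb z) x = rm D i x (emb z))"

definition Xi :: "('b::ring_1, 'i, 'x::ab_group_add) fpdata \<Rightarrow> 'i \<Rightarrow> ('b \<times> 'x) set" where
  "Xi D i = {(b, x). x \<in> Xo D i}"

definition Lop :: "('b::ring_1, 'i, 'x::ab_group_add) fpdata \<Rightarrow> 'i \<Rightarrow> ('b \<times> 'x \<Rightarrow> 'b \<times> 'x) set" where
  "Lop D i = {S. (\<forall>u\<in>Xi D i. S u \<in> Xi D i) \<and>
      (\<forall>u\<in>Xi D i. \<forall>v\<in>Xi D i. S (fst u + fst v, snd u + snd v) = (fst (S u) + fst (S v), snd (S u) + snd (S v))) \<and>
      (\<forall>a. \<forall>u\<in>Xi D i. S (a * fst u, lm D i a (snd u)) = (a * fst (S u), lm D i a (snd (S u)))) \<and>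
      (\<forall>a. \<forall>u\<in>Xi D i. S (fst u * a, rm D i (snd u) a) = (fst (S u) * a, rm D i (snd (S u)) a))}"

text \<open>Words (i_1,xi_1)...(i_n,xi_n) with n >= 1, consecutive indices distinct and
  xi_k in Xo i_k.  The free abelian group on these words modulo multi-additivity and
  B-balancing relations is the direct sum over alternating index sequences of the
  tensor products Xo_{i_1} (x)_B ... (x)_B Xo_{i_n}.\<close>

type_synonym ('i, 'x) word = "('i \<times> 'x) list"

definition alt :: "('b, 'i, 'x) fpdata \<Rightarrow> ('i, 'x) word \<Rightarrow> bool" where
  "alt D w \<longleftrightarrow> w \<noteq> [] \<and> (\<forall>k. Suc k < length w \<longrightarrow> fst (w ! k) \<noteq> fst (w ! Suc k))
      \<and> (\<forall>p\<in>set w. snd p \<in> Xo D (fst p))"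

inductive_set Nrel :: "('b::ring_1, 'i, 'x::ab_group_add) fpdata \<Rightarrow> (('i, 'x) word \<Rightarrow>\<^sub>0 int) set"
  for D where
  zero: "0 \<in> Nrel D"
| additive: "alt D (u @ [(i, x)] @ v) \<Longrightarrow> y \<in> Xo D i \<Longrightarrow>
     frag_of (u @ [(i, x + y)] @ v) - frag_of (u @ [(i, x)] @ v) - frag_of (u @ [(i, y)] @ v) \<in> Nrel D"
| balanced: "alt D (u @ [(i, x), (j, y)] @ v) \<Longrightarrow>
     frag_of (u @ [(i, rm D i x b), (j, y)] @ v) - frag_of (u @ [(i, x), (j, lm D j b y)] @ v) \<in> Nrel D"
| plus: "f \<in> Nrel D \<Longrightarrow> g \<in> Nrel D \<Longrightarrow> f + g \<in> Nrel D"
| neg: "f \<in> Nrel D \<Longrightarrow> - f \<in> Nrel D"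

definition cls :: "('b::ring_1, 'i, 'x::ab_group_add) fpdata \<Rightarrow> (('i, 'x) word \<Rightarrow>\<^sub>0 int) \<Rightarrow> (('i, 'x) word \<Rightarrow>\<^sub>0 int) set" where
  "cls D f = {g. g - f \<in> Nrel D}"

text \<open>Elements of X = B (+) Xo are pairs (b, class).\<close>
type_synonym ('b, 'i, 'x) xel = "'b \<times> (('i, 'x) word \<Rightarrow>\<^sub>0 int) set"

definition rep :: "(('i, 'x) word \<Rightarrow>\<^sub>0 int) set \<Rightarrow> (('i, 'x) word \<Rightarrow>\<^sub>0 int)" where
  "rep C = (SOME c. c \<in> C)"

text \<open>Left action of B on (representatives of) Xo: act on the first tensor factor.\<close>
definition hdact :: "('b, 'i, 'x) fpdata \<Rightarrow> 'b \<Rightarrow> ('i, 'x) word \<Rightarrow> ('i, 'x) word" where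
  "hdact D b w = (case w of [] \<Rightarrow> [] | p # r \<Rightarrow> (fst p, lm D (fst p) b (snd p)) # r)"

definition lactF :: "('b, 'i, 'x) fpdata \<Rightarrow> 'b \<Rightarrow> (('i, 'x) word \<Rightarrow>\<^sub>0 int) \<Rightarrow> (('i, 'x) word \<Rightarrow>\<^sub>0 int)" where
  "lactF D b f = frag_extend (\<lambda>w. frag_of (hdact D b w)) f"

text \<open>Image of a word w (a simple tensor in Xo) under V_i^{-1}(S (x) I)V_i, as a pair
  (B-component, representative of the Xo-component).  If w = (i,xi)r then
  V_i w = (0 (+) xi) (x) r; otherwise V_i w = (1 (+) 0) (x) w.  Writing S(.) = b' (+) eta,
  (b' (+) eta) (x) r is sent back to b'.r + (i,eta) r (with b'.r = b' in B when r is empty).\<close>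
definition lamW :: "('b::ring_1, 'i, 'x::ab_group_add) fpdata \<Rightarrow> ('b \<times> 'x \<Rightarrow> 'b \<times> 'x) \<Rightarrow> 'i
    \<Rightarrow> ('i, 'x) word \<Rightarrow> 'b \<times> (('i, 'x) word \<Rightarrow>\<^sub>0 int)" where
  "lamW D S i w = (case w of [] \<Rightarrow> (0, 0)
     | p # r \<Rightarrow>
        (if fst p = i then
           (let (b', eta) = S (0, snd p) in
              if r = [] then (b', frag_of [(i, eta)])
              else (0, lactF D b' (frag_of r) + frag_of ((i, eta) # r)))
         else
           (let (b', eta) = S (1, 0) in (0, lactF D b' (frag_of w) + frag_of ((i, eta) # w)))))"

definition lam :: "('b::ring_1, 'i, 'x::ab_group_add) fpdata \<Rightarrow> 'i \<Rightarrow> ('b \<times> 'x \<Rightarrow> 'b \<times> 'x)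
    \<Rightarrow> ('b, 'i, 'x) xel \<Rightarrow> ('b, 'i, 'x) xel" where
  "lam D i S u = (let b0 = fst u; c = rep (snd u); s = S (b0, 0) in
     (fst s + (\<Sum>w\<in>Poly_Mapping.keys c. of_int (Poly_Mapping.lookup c w) * fst (lamW D S i w)),
      cls D (frag_of [(i, snd s)] + frag_extend (\<lambda>w. snd (lamW D S i w)) c)))"

text \<open>P_i: projection onto the summand B (+) Xo_i.\<close>
definition Pproj :: "('b::ring_1, 'i, 'x::ab_group_add) fpdata \<Rightarrow> 'i \<Rightarrow> ('b, 'i, 'x) xel \<Rightarrow> ('b, 'i, 'x) xel" where
  "Pproj D i u = (let c = rep (snd u) in
     (fst u, cls D (frag_extend (\<lambda>w. if length w = 1 \<and> fst (hd w) = i then frag_of w else 0) c)))"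

text \<open>E(T) = p(T(1_B (+) 0)).\<close>
definition Ecal :: "('b::ring_1, 'i, 'x::ab_group_add) fpdata \<Rightarrow> (('b, 'i, 'x) xel \<Rightarrow> ('b, 'i, 'x) xel) \<Rightarrow> 'b" where
  "Ecal D T = fst (T (1, cls D 0))"

datatype fb = Fk | Bk

definition Aset :: "('b::ring_1, 'i, 'x::ab_group_add) fpdata \<Rightarrow> 'i \<Rightarrow> fb
    \<Rightarrow> (('b, 'i, 'x) xel \<Rightarrow> ('b, 'i, 'x) xel) set" where
  "Aset D i c = (case c of
      Fk \<Rightarrow> lam D i ` Lop D i
    | Bk \<Rightarrow> (\<lambda>S. Pproj D i \<circ> lam D i S \<circ> Pproj D i) ` Lop D i)"

definition opprod :: "(nat \<Rightarrow> 'a \<Rightarrow> 'a) \<Rightarrow> nat \<Rightarrow> nat \<Rightarrow> 'a \<Rightarrow> 'a" where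
  "opprod a m n = foldr (\<circ>) (map a [m..<Suc n]) id"

end

theory Submission
  imports Defs
begin

text \<open>The B-component of \<open>\<lambda>\<^sub>i(S) (b \<oplus> \<eta>)\<close> depends only on b and on the component of
  \<eta> in the summand \<open>Xo\<^sub>i\<close> (only words of length one with letter i contribute). The
  projection \<open>P\<^sub>i\<close> changes neither, so \<open>p(P\<^sub>i \<lambda>\<^sub>i(S) P\<^sub>i v) = p(\<lambda>\<^sub>i(S) v)\<close> and \<open>T = \<lambda>\<^sub>i(S)\<close>
  works for \<open>a\<^sub>1 = P\<^sub>i \<lambda>\<^sub>i(S) P\<^sub>i\<close>.\<close>

definition frag_eval :: "('a \<Rightarrow> 'b::ring_1) \<Rightarrow> ('a \<Rightarrow>\<^sub>0 int) \<Rightarrow> 'b" where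
  "frag_eval F f = (\<Sum>w\<in>Poly_Mapping.keys f. of_int (Poly_Mapping.lookup f w) * F w)"

lemma frag_eval_add: "frag_eval F (f + g) = frag_eval F f + frag_eval F g"
  unfolding frag_eval_def
  by (rule setsum_keys_plus_distrib) (auto simp: distrib_right)

lemma frag_eval_uminus: "frag_eval F (- f) = - frag_eval F f"
proof -
  have "Poly_Mapping.keys (- f) = Poly_Mapping.keys f"
    by (auto simp: in_keys_iff lookup_uminus)
  then show ?thesis
    by (simp add: frag_eval_def lookup_uminus sum_negf)
qed

lemma frag_eval_diff: "frag_eval F (f - g) = frag_eval F f - frag_eval F g"
  by (metis diff_conv_add_uminus frag_eval_add frag_eval_uminus)

lemma frag_eval_0 [simp]: "frag_eval F 0 = 0"
  by (simp add: frag_eval_def)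

lemma frag_eval_frag_of [simp]: "frag_eval F (frag_of w) = F w"
  by (simp add: frag_eval_def)

lemma frag_eval_restrict:
  assumes "\<And>w. \<not> P w \<Longrightarrow> F w = 0"
  shows "frag_eval F (frag_extend (\<lambda>w. if P w then frag_of w else 0) c) = frag_eval F c"
proof -
  have "Poly_Mapping.keys c \<subseteq> UNIV" by simp
  then show ?thesis
  proof (induction c rule: frag_induction)
    case (one x)
    then show ?case using assms by auto
  next
    case (diff a b)
    then show ?case by (simp add: frag_extend_diff frag_eval_diff)
  qed simp
qed

lemma rep_cls_diff_Nrel: "rep (cls D f) - f \<in> Nrel D"
proof -
  have "f \<in> cls D f" by (simp add: cls_def Nrel.zero)
  then have "rep (cls D f) \<in> cls D f" unfolding rep_def by (rule someI)
  then show ?thesis by (simp add: cls_def)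
qed

lemma fst_lamW:
  "fst (lamW D S i w) = (if length w = 1 \<and> fst (hd w) = i then fst (S (0, snd (hd w))) else 0)"
  by (cases w) (auto simp: lamW_def case_prod_unfold Let_def)

text \<open>Only the additivity relations inside a single letter of \<open>Xo\<^sub>i\<close> have a nonzero
  B-part, and those are killed by additivity of S.\<close>

lemma frag_eval_fst_lamW_Nrel:
  assumes S: "S \<in> Lop D i" and g: "g \<in> Nrel D"
  shows "frag_eval (\<lambda>w. fst (lamW D S i w)) g = 0"
  using g
proof induction
  case (additive u i' x v y)
  show ?case
  proof (cases "u = [] \<and> v = [] \<and> i' = i")
    case True
    have "(0, x) \<in> Xi D i" "(0, y) \<in> Xi D i"
      using additive True by (auto simp: alt_def Xi_def)
    then have "S (0 + 0, x + y) = (fst (S (0, x)) + fst (S (0, y)), snd (S (0, x)) + snd (S (0, y)))"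
      using S unfolding Lop_def by fastforce
    then show ?thesis using True by (simp add: frag_eval_diff fst_lamW)
  next
    case False
    then show ?thesis by (cases u) (auto simp: frag_eval_diff fst_lamW)
  qed
next
  case (balanced u i' x j y v b)
  then show ?case by (cases u) (auto simp: frag_eval_diff fst_lamW)
next
  case (plus f g)
  then show ?case by (simp add: frag_eval_add)
next
  case (neg f)
  then show ?case by (simp add: frag_eval_uminus)
qed simp

lemma frag_eval_fst_lamW_rep_cls:
  assumes "S \<in> Lop D i"
  shows "frag_eval (\<lambda>w. fst (lamW D S i w)) (rep (cls D f)) = frag_eval (\<lambda>w. fst (lamW D S i w)) f"
  using frag_eval_fst_lamW_Nrel[OF assms rep_cls_diff_Nrel] by (simp add: frag_eval_diff)

lemma fst_lam: "fst (lam D i S u) = fst (S (fst u, 0)) + frag_eval (\<lambda>w. fst (lamW D S i w)) (rep (snd u))"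
  by (simp add: lam_def Let_def frag_eval_def)

lemma fst_Pproj [simp]: "fst (Pproj D i u) = fst u"
  by (simp add: Pproj_def Let_def)

lemma fst_lam_Pproj:
  assumes "S \<in> Lop D i"
  shows "fst (lam D i S (Pproj D i u)) = fst (lam D i S u)"
proof -
  let ?F = "\<lambda>w. fst (lamW D S i w)"
  let ?P = "\<lambda>w. length w = 1 \<and> fst (hd w) = i"
  have "snd (Pproj D i u) = cls D (frag_extend (\<lambda>w. if ?P w then frag_of w else 0) (rep (snd u)))"
    by (simp add: Pproj_def Let_def)
  then have "frag_eval ?F (rep (snd (Pproj D i u)))
      = frag_eval ?F (frag_extend (\<lambda>w. if ?P w then frag_of w else 0) (rep (snd u)))"
    by (simp only: frag_eval_fst_lamW_rep_cls[OF assms])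
  also have "\<dots> = frag_eval ?F (rep (snd u))"
    by (rule frag_eval_restrict) (auto simp: fst_lamW)
  finally have "frag_eval ?F (rep (snd (Pproj D i u))) = frag_eval ?F (rep (snd u))" .
  then show ?thesis by (simp add: fst_lam)
qed

lemma Ecal_Pproj_lam_Pproj:
  assumes "S \<in> Lop D i"
  shows "Ecal D ((Pproj D i \<circ> lam D i S \<circ> Pproj D i) \<circ> R) = Ecal D (lam D i S \<circ> R)"
  by (simp add: Ecal_def fst_lam_Pproj[OF assms])

theorem lemma4p9:
  fixes emb :: "complex \<Rightarrow> 'b::ring_1"
    and D :: "('b, 'i, 'x::ab_group_add) fpdata"
    and n :: nat and \<omega> :: "nat \<Rightarrow> 'i" and \<chi> :: "nat \<Rightarrow> fb"
    and a :: "nat \<Rightarrow> ('b, 'i, 'x) xel \<Rightarrow> ('b, 'i, 'x) xel"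
  assumes "unital_calg emb"
    and "\<forall>i. bimod emb D i"
    and "1 \<le> n"
    and "\<forall>k\<in>{1..n}. a k \<in> Aset D (\<omega> k) (\<chi> k)"
    and "\<chi> 1 = Bk"
  shows "\<exists>T\<in>Aset D (\<omega> 1) Fk. Ecal D (a 1 \<circ> opprod a 2 n) = Ecal D (T \<circ> opprod a 2 n)"
proof -
  have "a 1 \<in> Aset D (\<omega> 1) Bk" using assms(3-5) by force
  then obtain S where S: "S \<in> Lop D (\<omega> 1)"
    and a1: "a 1 = Pproj D (\<omega> 1) \<circ> lam D (\<omega> 1) S \<circ> Pproj D (\<omega> 1)"
    by (auto simp: Aset_def)
  have "lam D (\<omega> 1) S \<in> Aset D (\<omega> 1) Fk" using S by (simp add: Aset_def)
  moreover have "Ecal D (a 1 \<circ> opprod a 2 n) = Ecal D (lam D (\<omega> 1) S \<circ> opprod a 2 n)"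
    unfolding a1 by (rule Ecal_Pproj_lam_Pproj[OF S])
  ultimately show ?thesis by blast
qed

end
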